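(* Let $\mathcal M=(M,\le,{}^\perp)$ be a complete orthomodular lattice, $L$ an involutive submonoid of $\mathbf{Lin}(\mathcal M)$ containing all Sasaki projections, and $\mathscr P(L)$ the corresponding involutive generalized dynamic algebra. Then $\widetilde{\mathscr P(L)}=(\{{\sim}W\mid W\in\mathscr P(L)\},\preceq,{\sim})$ is a complete orthomodular lattice closed under ${\sim}$, and the map $\delta\colon M\to\widetilde{\mathscr P(L)}$, $\delta(m)=\{\pi_m\}$, is an order-isomorphism with $\delta(m^\perp)={\sim}\delta(m)$ for all $m\in M$.
   Context: For an orthomodular lattice and $m\in M$, $\pi_m(x)=m\wedge(m^\perp\vee x)$ (Sasaki projection). A map $f\colon M\to M$ is linear if there is $g\colon M\to M$ (unique, written $f^*$) with $f(x)\le y^\perp\iff x\le g(y)^\perp$ for all $x,y$. $\mathbf{Lin}(\mathcal M)$ is the set of linear maps, an involutive monoid under composition, $f\mapsto f^*$, $\mathrm{id}_M$; each $\pi_m\in\mathbf{Lin}(\mathcal M)$. $\mathscr P(L)$ is the powerset of $L$ with union as join, $A\odot B=\{a\circ b\mid a\in A,b\in B\}$, $A^*=\{a^*\mid a\in A\}$, unit $\{\mathrm{id}_M\}$, ${\sim}A=\{\pi_{(\bigvee_{a\in A}a(1))^\perp}\}$. For a subset family $\mathcal W$ of the test set $\widetilde{\mathscr P(L)}=\{{\sim}W\}$, its join is $\bigvee\mathcal W={\sim}{\sim}(\bigcup\mathcal W)$, and $X\preceq Y$ iff $\bigvee\{X,Y\}=Y$. *)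

theory Defs
  imports "HOL-Library.Complemented_Lattices"
begin

text \<open>Orthomodular lattices are taken as the library class; the orthocomplement
  is \<open>uminus\<close>, the top element is \<open>top\<close>.\<close>

definition sasaki :: "'a::orthomodular_lattice \<Rightarrow> 'a \<Rightarrow> 'a" where
  "sasaki m x = inf m (sup (- m) x)"

definition is_linear :: "('a::orthomodular_lattice \<Rightarrow> 'a) \<Rightarrow> bool" where
  "is_linear f \<longleftrightarrow> (\<exists>g. \<forall>x y. f x \<le> - y \<longleftrightarrow> x \<le> - g y)"

definition adjoint :: "('a::orthomodular_lattice \<Rightarrow> 'a) \<Rightarrow> ('a \<Rightarrow> 'a)" where
  "adjoint f = (THE g. \<forall>x y. f x \<le> - y \<longleftrightarrow> x \<le> - g y)"

definition Lin :: "('a::orthomodular_lattice \<Rightarrow> 'a) set" where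
  "Lin = {f. is_linear f}"

definition inv_submonoid_sasaki :: "('a::orthomodular_lattice \<Rightarrow> 'a) set \<Rightarrow> bool" where
  "inv_submonoid_sasaki L \<longleftrightarrow> L \<subseteq> Lin \<and> id \<in> L \<and>
     (\<forall>f\<in>L. \<forall>g\<in>L. f \<circ> g \<in> L) \<and> (\<forall>f\<in>L. adjoint f \<in> L) \<and>
     (\<forall>m. sasaki m \<in> L)"

definition pneg :: "('a::complete_orthomodular_lattice \<Rightarrow> 'a) set \<Rightarrow> ('a \<Rightarrow> 'a) set" where
  "pneg A = {sasaki (- (SUP a\<in>A. a top))}"

definition tests :: "('a::complete_orthomodular_lattice \<Rightarrow> 'a) set \<Rightarrow> ('a \<Rightarrow> 'a) set set" where
  "tests L = {pneg W | W. W \<subseteq> L}"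

definition tjoin :: "('a::complete_orthomodular_lattice \<Rightarrow> 'a) set set \<Rightarrow> ('a \<Rightarrow> 'a) set" where
  "tjoin \<W> = pneg (pneg (\<Union>\<W>))"

definition tle :: "('a::complete_orthomodular_lattice \<Rightarrow> 'a) set \<Rightarrow> ('a \<Rightarrow> 'a) set \<Rightarrow> bool" where
  "tle X Y \<longleftrightarrow> tjoin {X, Y} = Y"

definition is_lub_on :: "'b set \<Rightarrow> ('b \<Rightarrow> 'b \<Rightarrow> bool) \<Rightarrow> 'b set \<Rightarrow> 'b \<Rightarrow> bool" where
  "is_lub_on T le S u \<longleftrightarrow> u \<in> T \<and> (\<forall>s\<in>S. le s u) \<and> (\<forall>v\<in>T. (\<forall>s\<in>S. le s v) \<longrightarrow> le u v)"

definition is_glb_on :: "'b set \<Rightarrow> ('b \<Rightarrow> 'b \<Rightarrow> bool) \<Rightarrow> 'b set \<Rightarrow> 'b \<Rightarrow> bool" where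
  "is_glb_on T le S u \<longleftrightarrow> u \<in> T \<and> (\<forall>s\<in>S. le u s) \<and> (\<forall>v\<in>T. (\<forall>s\<in>S. le v s) \<longrightarrow> le v u)"

definition sup_on :: "'b set \<Rightarrow> ('b \<Rightarrow> 'b \<Rightarrow> bool) \<Rightarrow> 'b \<Rightarrow> 'b \<Rightarrow> 'b" where
  "sup_on T le x y = (THE u. is_lub_on T le {x, y} u)"

definition inf_on :: "'b set \<Rightarrow> ('b \<Rightarrow> 'b \<Rightarrow> bool) \<Rightarrow> 'b \<Rightarrow> 'b \<Rightarrow> 'b" where
  "inf_on T le x y = (THE u. is_glb_on T le {x, y} u)"

definition top_on :: "'b set \<Rightarrow> ('b \<Rightarrow> 'b \<Rightarrow> bool) \<Rightarrow> 'b" where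
  "top_on T le = (THE u. is_lub_on T le T u)"

definition bot_on :: "'b set \<Rightarrow> ('b \<Rightarrow> 'b \<Rightarrow> bool) \<Rightarrow> 'b" where
  "bot_on T le = (THE u. is_glb_on T le T u)"

definition complete_oml_on :: "'b set \<Rightarrow> ('b \<Rightarrow> 'b \<Rightarrow> bool) \<Rightarrow> ('b \<Rightarrow> 'b) \<Rightarrow> bool" where
  "complete_oml_on T le c \<longleftrightarrow>
     (\<forall>x\<in>T. le x x) \<and>
     (\<forall>x\<in>T. \<forall>y\<in>T. le x y \<and> le y x \<longrightarrow> x = y) \<and>
     (\<forall>x\<in>T. \<forall>y\<in>T. \<forall>z\<in>T. le x y \<and> le y z \<longrightarrow> le x z) \<and>
     (\<forall>S\<subseteq>T. \<exists>u. is_lub_on T le S u) \<and>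
     (\<forall>S\<subseteq>T. \<exists>u. is_glb_on T le S u) \<and>
     (\<forall>x\<in>T. c x \<in> T) \<and>
     (\<forall>x\<in>T. c (c x) = x) \<and>
     (\<forall>x\<in>T. \<forall>y\<in>T. le x y \<longrightarrow> le (c y) (c x)) \<and>
     (\<forall>x\<in>T. inf_on T le x (c x) = bot_on T le) \<and>
     (\<forall>x\<in>T. sup_on T le x (c x) = top_on T le) \<and>
     (\<forall>x\<in>T. \<forall>y\<in>T. le x y \<longrightarrow> y = sup_on T le x (inf_on T le y (c x)))"

end

theory Submission
  imports Defs
begin

text \<open>Because \<open>\<pi>\<^sub>m 1 = m\<close>, every test \<open>\<sim>W\<close> is a singleton \<open>{\<pi>\<^sub>m}\<close> that
  determines \<open>m\<close>, and conversely \<open>{\<pi>\<^sub>m} = \<sim>{\<pi>\<^sub>m\<^sub>\<bottom>}\<close> is a test since \<open>L\<close>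
  contains all Sasaki projections.  On singletons the join and \<open>\<sim>\<close> are
  \<open>{\<pi>\<^sub>m} \<or> {\<pi>\<^sub>n} = {\<pi>\<^sub>m\<^sub>\<squnion>\<^sub>n}\<close> and \<open>\<sim>{\<pi>\<^sub>m} = {\<pi>\<^sub>m\<^sub>\<bottom>}\<close>, so \<open>m \<mapsto> {\<pi>\<^sub>m}\<close> is an
  order isomorphism onto the tests commuting with the orthocomplements, and
  the complete orthomodular structure of \<open>M\<close> is transported along it.\<close>

locale order_embedding_into =
  fixes \<phi> :: "'a::complete_orthomodular_lattice \<Rightarrow> 'b"
    and le :: "'b \<Rightarrow> 'b \<Rightarrow> bool"
  assumes le_iff: "le (\<phi> x) (\<phi> y) \<longleftrightarrow> x \<le> y"
begin

lemma inj: "inj \<phi>"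
  by (rule injI) (metis le_iff order.refl order.antisym)

lemma antisym_on_range: "u \<in> range \<phi> \<Longrightarrow> v \<in> range \<phi> \<Longrightarrow> le u v \<Longrightarrow> le v u \<Longrightarrow> u = v"
  using le_iff by (auto intro: order.antisym)

lemma is_lub_on_range_Sup: "is_lub_on (range \<phi>) le (\<phi> ` A) (\<phi> (Sup A))"
  unfolding is_lub_on_def using le_iff by (auto intro: Sup_upper Sup_least)

lemma is_glb_on_range_Inf: "is_glb_on (range \<phi>) le (\<phi> ` A) (\<phi> (Inf A))"
  unfolding is_glb_on_def using le_iff by (auto intro: Inf_lower Inf_greatest)

lemma is_lub_on_range_unique:
  "is_lub_on (range \<phi>) le S u \<Longrightarrow> is_lub_on (range \<phi>) le S v \<Longrightarrow> u = v"
  unfolding is_lub_on_def by (meson antisym_on_range)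

lemma is_glb_on_range_unique:
  "is_glb_on (range \<phi>) le S u \<Longrightarrow> is_glb_on (range \<phi>) le S v \<Longrightarrow> u = v"
  unfolding is_glb_on_def by (meson antisym_on_range)

lemma sup_on_range: "sup_on (range \<phi>) le (\<phi> x) (\<phi> y) = \<phi> (sup x y)"
proof -
  have "is_lub_on (range \<phi>) le {\<phi> x, \<phi> y} (\<phi> (sup x y))"
    using is_lub_on_range_Sup[of "{x, y}"] by simp
  then show ?thesis
    unfolding sup_on_def by (blast intro: the_equality is_lub_on_range_unique)
qed

lemma inf_on_range: "inf_on (range \<phi>) le (\<phi> x) (\<phi> y) = \<phi> (inf x y)"
proof -
  have "is_glb_on (range \<phi>) le {\<phi> x, \<phi> y} (\<phi> (inf x y))"
    using is_glb_on_range_Inf[of "{x, y}"] by simp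
  then show ?thesis
    unfolding inf_on_def by (blast intro: the_equality is_glb_on_range_unique)
qed

lemma top_on_range: "top_on (range \<phi>) le = \<phi> top"
proof -
  have "is_lub_on (range \<phi>) le (range \<phi>) (\<phi> top)"
    using is_lub_on_range_Sup[of UNIV] by simp
  then show ?thesis
    unfolding top_on_def by (blast intro: the_equality is_lub_on_range_unique)
qed

lemma bot_on_range: "bot_on (range \<phi>) le = \<phi> bot"
proof -
  have "is_glb_on (range \<phi>) le (range \<phi>) (\<phi> bot)"
    using is_glb_on_range_Inf[of UNIV] by simp
  then show ?thesis
    unfolding bot_on_def by (blast intro: the_equality is_glb_on_range_unique)
qed

lemma complete_oml_on_range:
  assumes compl: "\<And>x. c (\<phi> x) = \<phi> (- x)"
  shows "complete_oml_on (range \<phi>) le c"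
  unfolding complete_oml_on_def
proof (intro conjI)
  show "\<forall>S\<subseteq>range \<phi>. \<exists>u. is_lub_on (range \<phi>) le S u"
    by (metis subset_image_iff is_lub_on_range_Sup)
  show "\<forall>S\<subseteq>range \<phi>. \<exists>u. is_glb_on (range \<phi>) le S u"
    by (metis subset_image_iff is_glb_on_range_Inf)
  show "\<forall>x\<in>range \<phi>. \<forall>y\<in>range \<phi>. le x y \<longrightarrow> y = sup_on (range \<phi>) le x (inf_on (range \<phi>) le y (c x))"
  proof (clarify)
    fix a b assume "le (\<phi> a) (\<phi> b)"
    then have "b = sup a (inf b (- a))"
      using orthomodular[of a b] le_iff by (simp add: inf_commute)
    then show "\<phi> b = sup_on (range \<phi>) le (\<phi> a) (inf_on (range \<phi>) le (\<phi> b) (c (\<phi> a)))"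
      by (simp add: compl sup_on_range inf_on_range)
  qed
qed (auto simp: le_iff compl inf_on_range sup_on_range top_on_range bot_on_range
       intro: antisym_on_range order_trans)

end

lemma sasaki_top [simp]: "sasaki m top = m"
  by (simp add: sasaki_def)

lemma pneg_sasaki: "pneg {sasaki m} = {sasaki (- m)}"
  by (simp add: pneg_def)

lemma tjoin_sasaki: "tjoin {{sasaki m}, {sasaki n}} = {sasaki (sup m n)}"
  by (simp add: tjoin_def pneg_def sup_commute)

lemma tle_sasaki_iff: "tle {sasaki m} {sasaki n} \<longleftrightarrow> m \<le> n"
proof -
  have "tle {sasaki m} {sasaki n} \<longleftrightarrow> sasaki (sup m n) = sasaki n"
    by (simp add: tle_def tjoin_sasaki)
  also have "\<dots> \<longleftrightarrow> sup m n = n"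
    by (metis sasaki_top)
  finally show ?thesis
    by (simp add: le_iff_sup)
qed

lemma tests_eq_range_sasaki:
  assumes "\<And>m. sasaki m \<in> L"
  shows "tests L = range (\<lambda>m. {sasaki m})"
proof
  show "tests L \<subseteq> range (\<lambda>m. {sasaki m})"
    unfolding tests_def pneg_def by auto
  show "range (\<lambda>m. {sasaki m}) \<subseteq> tests L"
  proof clarify
    fix m :: 'a
    have "{sasaki m} = pneg {sasaki (- m)}"
      by (simp add: pneg_sasaki)
    moreover have "{sasaki (- m)} \<subseteq> L"
      using assms by simp
    ultimately show "{sasaki m} \<in> tests L"
      unfolding tests_def by blast
  qed
qed

theorem proposition3p10:
  fixes L :: "('a::complete_orthomodular_lattice \<Rightarrow> 'a) set"
  assumes "inv_submonoid_sasaki L"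
  shows "complete_oml_on (tests L) tle pneg
     \<and> (\<forall>X\<in>tests L. pneg X \<in> tests L)
     \<and> bij_betw (\<lambda>m. {sasaki m}) UNIV (tests L)
     \<and> (\<forall>m n :: 'a. m \<le> n \<longleftrightarrow> tle {sasaki m} {sasaki n})
     \<and> (\<forall>m :: 'a. {sasaki (- m)} = pneg {sasaki m})"
proof -
  interpret order_embedding_into "\<lambda>m::'a. {sasaki m}" tle
    by unfold_locales (fact tle_sasaki_iff)
  have tests: "tests L = range (\<lambda>m. {sasaki m})"
    using assms by (intro tests_eq_range_sasaki) (simp add: inv_submonoid_sasaki_def)
  have "complete_oml_on (tests L) tle pneg"
    unfolding tests by (rule complete_oml_on_range) (fact pneg_sasaki)
  then show ?thesis
    using inj by (auto simp: tests bij_betw_def tle_sasaki_iff pneg_sasaki)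
qed

end
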